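(* For every $n\ge1$: $2r_n\in C(2r_{n+1})$, $4r_n\in C(4r_{n+1})$, $2t_n\in C(2t_{n+1})$, $2s_n\in C(2s_{n+1})$, $2p_n\in C(2p_{n+1})$, $2q_n\in C(2q_{n+1})$, $2u_n\in C(2u_{n+1})$ and $2w_n\in C(2w_{n+1})$. For every $n\ge 2$: $2v_n\in C(2v_{n+1})$.
   Context: All operations are on $\mathbb{Z}_8$. For an operation $f$, $C(f)$ denotes the clone generated by $f$ together with binary addition and all unary constant operations. For $n\ge1$: $r_n=x_1\cdots x_n$; $t_n=x_1\cdots x_n(x_1+\dots+x_n)$ if $n$ is even and $t_n=x_1\cdots x_n(x_1+\dots+x_n+1)$ if $n$ is odd; $s_n=x_1\cdots x_n(x_1+\dots+x_n)$ if $n$ is odd and $s_n=x_1\cdots x_n(x_1+\dots+x_n+1)$ if $n$ is even; $p_n=x_1^2x_2\cdots x_n$; $q_n=x_1^3x_2\cdots x_n$; $w_n=x_1\cdots x_n(x_1^2+1)$; $u_n=x_1\cdots x_n(x_1+1)$; for $n\ge 2$, $v_n=x_1\cdots x_n(x_1+x_2)$. *)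

theory Defs
  imports "HOL-Library.Numeral_Type"
begin

text \<open>An operation of arity n on a set A is encoded as a pair (n, f) where
  f :: (nat => A) => A only depends on the arguments x 0, ..., x (n-1).\<close>
type_synonym 'a op = "nat \<times> ((nat \<Rightarrow> 'a) \<Rightarrow> 'a)"

inductive_set clone_gen :: "'a op set \<Rightarrow> 'a op set" for F :: "'a op set" where
  proj: "i < n \<Longrightarrow> (n, \<lambda>x. x i) \<in> clone_gen F"
| gen: "p \<in> F \<Longrightarrow> p \<in> clone_gen F"
| comp: "(m, f) \<in> clone_gen F \<Longrightarrow> (\<forall>i<m. (n, g i) \<in> clone_gen F)
          \<Longrightarrow> (n, \<lambda>x. f (\<lambda>i. g i x)) \<in> clone_gen F"

definition C :: "8 op \<Rightarrow> 8 op set" where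
  "C f = clone_gen ({f, (2, \<lambda>x. x 0 + x 1)} \<union> {(1, \<lambda>x. c) | c. True})"

definition rr :: "nat \<Rightarrow> (nat \<Rightarrow> 8) \<Rightarrow> 8" where
  "rr n x = (\<Prod>i<n. x i)"

definition tt :: "nat \<Rightarrow> (nat \<Rightarrow> 8) \<Rightarrow> 8" where
  "tt n x = (if even n then rr n x * (\<Sum>i<n. x i) else rr n x * ((\<Sum>i<n. x i) + 1))"

definition ss :: "nat \<Rightarrow> (nat \<Rightarrow> 8) \<Rightarrow> 8" where
  "ss n x = (if odd n then rr n x * (\<Sum>i<n. x i) else rr n x * ((\<Sum>i<n. x i) + 1))"

definition pp :: "nat \<Rightarrow> (nat \<Rightarrow> 8) \<Rightarrow> 8" where
  "pp n x = x 0 ^ 2 * (\<Prod>i\<in>{1..<n}. x i)"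

definition qq :: "nat \<Rightarrow> (nat \<Rightarrow> 8) \<Rightarrow> 8" where
  "qq n x = x 0 ^ 3 * (\<Prod>i\<in>{1..<n}. x i)"

definition ww :: "nat \<Rightarrow> (nat \<Rightarrow> 8) \<Rightarrow> 8" where
  "ww n x = rr n x * (x 0 ^ 2 + 1)"

definition uu :: "nat \<Rightarrow> (nat \<Rightarrow> 8) \<Rightarrow> 8" where
  "uu n x = rr n x * (x 0 + 1)"

definition vv :: "nat \<Rightarrow> (nat \<Rightarrow> 8) \<Rightarrow> 8" where
  "vv n x = rr n x * (x 0 + x 1)"

definition sop :: "8 \<Rightarrow> (nat \<Rightarrow> (nat \<Rightarrow> 8) \<Rightarrow> 8) \<Rightarrow> nat \<Rightarrow> 8 op" where
  "sop c h n = (n, \<lambda>x. c * h n x)"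

end

theory Submission
  imports Defs
begin

text \<open>Each operation of arity n is obtained from its (n+1)-ary counterpart by fixing the
  last variable to a constant a and multiplying by a scalar b: mostly a = b = 1, and for
  t and s in the parity where the "+1" in the defining sum changes, a = b = -1 = 7, since
  x_1 + ... + x_n + 7 + 1 = x_1 + ... + x_n and 7 * 7 = 1 in Z_8.  A clone containing
  the constants and addition is closed under fixing variables, and under multiplication by
  any scalar of Z_8 (a repeated sum).  The coefficient c of c * h plays no role.\<close>

lemma clone_gen_const:
  assumes "(1, \<lambda>_. c) \<in> clone_gen F" and "1 \<le> n"
  shows "(n, \<lambda>_. c) \<in> clone_gen F"
proof -
  have "(n, \<lambda>x. x 0) \<in> clone_gen F"
    using assms(2) by (intro clone_gen.proj) simp
  then show ?thesis
    using clone_gen.comp[OF assms(1), of n "\<lambda>_ x. x 0"] by simp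
qed

lemma clone_gen_add:
  assumes "(2, \<lambda>x. x 0 + x 1) \<in> clone_gen F"
    and "(n, g) \<in> clone_gen F" and "(n, h) \<in> clone_gen F"
  shows "(n, \<lambda>x. g x + h x) \<in> clone_gen F"
  using clone_gen.comp[OF assms(1), of n "\<lambda>i. if i = 0 then g else h"] assms(2,3)
  by (simp add: less_2_cases_iff)

lemma clone_gen_of_nat_Suc_mult:
  fixes g :: "(nat \<Rightarrow> 'a::semiring_1) \<Rightarrow> 'a"
  assumes "(2, \<lambda>x. x 0 + x 1) \<in> clone_gen F" and "(n, g) \<in> clone_gen F"
  shows "(n, \<lambda>x. of_nat (Suc k) * g x) \<in> clone_gen F"
proof (induction k)
  case 0
  then show ?case using assms(2) by simp
next
  case (Suc k)
  from clone_gen_add[OF assms(1) Suc assms(2)] show ?case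
    by (simp add: algebra_simps)
qed

lemma C_gen: "f \<in> C f"
  unfolding C_def by (simp add: clone_gen.gen)

lemma C_plus: "(2, \<lambda>x. x 0 + x 1) \<in> C f"
  unfolding C_def by (simp add: clone_gen.gen)

lemma C_const: "1 \<le> n \<Longrightarrow> (n, \<lambda>_. c) \<in> C f"
  unfolding C_def by (rule clone_gen_const) (auto intro: clone_gen.gen)

lemma C_mult:
  assumes "(n, g) \<in> C f"
  shows "(n, \<lambda>x. b * g x) \<in> C f"
proof -
  obtain z where "b = of_int z" "0 \<le> z"
    by (cases b)
  \<comment> \<open>shifting by 8 = 0 gives a positive multiple, which needs no zero constant\<close>
  then have b_eq: "b = of_nat (Suc (nat z + 7))"
    by simp
  have "(n, \<lambda>x. of_nat (Suc (nat z + 7)) * g x) \<in> C f"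
    unfolding C_def by (rule clone_gen_of_nat_Suc_mult[OF C_plus[unfolded C_def] assms[unfolded C_def]])
  then show ?thesis
    unfolding b_eq[symmetric] .
qed

definition snoc_arg :: "nat \<Rightarrow> (nat \<Rightarrow> 'a) \<Rightarrow> 'a \<Rightarrow> nat \<Rightarrow> 'a" where
  "snoc_arg n x a i = (if i < n then x i else a)"

lemma snoc_arg_less [simp]: "i < n \<Longrightarrow> snoc_arg n x a i = x i"
  by (simp add: snoc_arg_def)

lemma snoc_arg_last [simp]: "snoc_arg n x a n = a"
  by (simp add: snoc_arg_def)

lemma C_fix_last_arg:
  assumes "(Suc n, F) \<in> C f" and "1 \<le> n"
  shows "(n, \<lambda>x. F (snoc_arg n x a)) \<in> C f"
proof -
  have "(n, \<lambda>x. snoc_arg n x a i) \<in> C f" if "i < Suc n" for i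
    using that assms(2) C_const[of n a f] unfolding C_def
    by (auto simp: less_Suc_eq intro: clone_gen.proj)
  then show ?thesis
    using clone_gen.comp[OF assms(1)[unfolded C_def], of n "\<lambda>i x. snoc_arg n x a i"]
    unfolding C_def by blast
qed

lemma sop_in_C_sop_Suc:
  assumes "1 \<le> n" and "\<And>x. h n x = b * h (Suc n) (snoc_arg n x a)"
  shows "sop c h n \<in> C (sop c h (Suc n))"
proof -
  have "(n, \<lambda>x. b * (c * h (Suc n) (snoc_arg n x a))) \<in> C (sop c h (Suc n))"
    using C_mult C_fix_last_arg C_gen[of "sop c h (Suc n)"] assms(1) unfolding sop_def by blast
  then show ?thesis
    unfolding sop_def assms(2) by (simp add: mult.left_commute)
qed

lemma rr_snoc_arg: "rr (Suc n) (snoc_arg n x a) = rr n x * a"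
  by (simp add: rr_def)

lemma prod_from1_snoc_arg:
  "1 \<le> n \<Longrightarrow> (\<Prod>i\<in>{1..<Suc n}. snoc_arg n x a i) = (\<Prod>i\<in>{1..<n}. x i) * a"
  by (simp add: prod.atLeastLessThan_Suc)

lemma sop_rr_in_C_sop_Suc: "1 \<le> n \<Longrightarrow> sop c rr n \<in> C (sop c rr (Suc n))"
  by (rule sop_in_C_sop_Suc[where b = 1 and a = 1]) (simp_all add: rr_snoc_arg)

lemma sop_pp_in_C_sop_Suc: "1 \<le> n \<Longrightarrow> sop c pp n \<in> C (sop c pp (Suc n))"
  by (rule sop_in_C_sop_Suc[where b = 1 and a = 1]) (simp_all add: pp_def prod_from1_snoc_arg)

lemma sop_qq_in_C_sop_Suc: "1 \<le> n \<Longrightarrow> sop c qq n \<in> C (sop c qq (Suc n))"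
  by (rule sop_in_C_sop_Suc[where b = 1 and a = 1]) (simp_all add: qq_def prod_from1_snoc_arg)

lemma sop_uu_in_C_sop_Suc: "1 \<le> n \<Longrightarrow> sop c uu n \<in> C (sop c uu (Suc n))"
  by (rule sop_in_C_sop_Suc[where b = 1 and a = 1]) (simp_all add: uu_def rr_snoc_arg)

lemma sop_ww_in_C_sop_Suc: "1 \<le> n \<Longrightarrow> sop c ww n \<in> C (sop c ww (Suc n))"
  by (rule sop_in_C_sop_Suc[where b = 1 and a = 1]) (simp_all add: ww_def rr_snoc_arg)

lemma sop_vv_in_C_sop_Suc: "2 \<le> n \<Longrightarrow> sop c vv n \<in> C (sop c vv (Suc n))"
  by (rule sop_in_C_sop_Suc[where b = 1 and a = 1]) (simp_all add: vv_def rr_snoc_arg)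

lemma Z8_numerals: "(8::8) = 0" "(49::8) = 1"
  by simp_all

lemma tt_even_snoc_arg: "even n \<Longrightarrow> tt n x = 7 * tt (Suc n) (snoc_arg n x 7)"
  by (simp add: tt_def rr_snoc_arg add.assoc Z8_numerals mult_ac)

lemma tt_odd_snoc_arg: "odd n \<Longrightarrow> tt n x = tt (Suc n) (snoc_arg n x 1)"
  by (simp add: tt_def rr_snoc_arg)

lemma ss_odd_snoc_arg: "odd n \<Longrightarrow> ss n x = 7 * ss (Suc n) (snoc_arg n x 7)"
  by (simp add: ss_def rr_snoc_arg add.assoc Z8_numerals mult_ac)

lemma ss_even_snoc_arg: "even n \<Longrightarrow> ss n x = ss (Suc n) (snoc_arg n x 1)"
  by (simp add: ss_def rr_snoc_arg)

lemma sop_tt_in_C_sop_Suc: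
  assumes "1 \<le> n"
  shows "sop c tt n \<in> C (sop c tt (Suc n))"
proof (cases "even n")
  case True
  then show ?thesis
    by (intro sop_in_C_sop_Suc[where b = 7 and a = 7] assms tt_even_snoc_arg)
next
  case False
  then show ?thesis
    by (intro sop_in_C_sop_Suc[where b = 1 and a = 1] assms) (simp add: tt_odd_snoc_arg)
qed

lemma sop_ss_in_C_sop_Suc:
  assumes "1 \<le> n"
  shows "sop c ss n \<in> C (sop c ss (Suc n))"
proof (cases "odd n")
  case True
  then show ?thesis
    by (intro sop_in_C_sop_Suc[where b = 7 and a = 7] assms ss_odd_snoc_arg)
next
  case False
  then show ?thesis
    by (intro sop_in_C_sop_Suc[where b = 1 and a = 1] assms) (simp add: ss_even_snoc_arg)
qed

theorem lemma4p2:
  shows "(\<forall>n\<ge>1.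
            sop 2 rr n \<in> C (sop 2 rr (Suc n)) \<and>
            sop 4 rr n \<in> C (sop 4 rr (Suc n)) \<and>
            sop 2 tt n \<in> C (sop 2 tt (Suc n)) \<and>
            sop 2 ss n \<in> C (sop 2 ss (Suc n)) \<and>
            sop 2 pp n \<in> C (sop 2 pp (Suc n)) \<and>
            sop 2 qq n \<in> C (sop 2 qq (Suc n)) \<and>
            sop 2 uu n \<in> C (sop 2 uu (Suc n)) \<and>
            sop 2 ww n \<in> C (sop 2 ww (Suc n))) \<and>
         (\<forall>n\<ge>2. sop 2 vv n \<in> C (sop 2 vv (Suc n)))"
  by (simp add: sop_rr_in_C_sop_Suc sop_tt_in_C_sop_Suc sop_ss_in_C_sop_Suc
      sop_pp_in_C_sop_Suc sop_qq_in_C_sop_Suc sop_uu_in_C_sop_Suc sop_ww_in_C_sop_Suc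
      sop_vv_in_C_sop_Suc)

end
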